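(* For $q\in(0,1)$, let $(X_q,d_q)$ be the compact metric space with $X_q=\{0\}\cup\{q^{2k}:k\in\mathbb N_0\}$ and $d_q$ as defined in the context. Then the map $q\mapsto (X_q,d_q)$ from $(0,1)$ to compact metric spaces is continuous with respect to the Gromov–Hausdorff distance, and $(X_q,d_q)$ converges in Gromov–Hausdorff distance to the interval $[-\pi/2,\pi/2]$ with its standard Euclidean metric as $q\to 1^-$.
   Context: For $q\in(0,1)$ define $\rho_q:[-1,\infty)\to\mathbb R$ by $\rho_q(x)=\dfrac{\sqrt{1-q^{2(x+1)}}}{(1-q^2)q^x}$, and define $d_q:X_q\times X_q\to[0,\infty)$ by $d_q(x,x)=0$; $d_q(q^{2n},q^{2m})=\sum_{k=\min\{m,n\}}^{\max\{m,n\}-1}1/\rho_q(k)$ for $n\ne m$; and $d_q(q^{2n},0)=d_q(0,q^{2n})=\sum_{k=n}^\infty 1/\rho_q(k)$. The Gromov–Hausdorff distance between compact metric spaces $X,Y$ is the infimum of Hausdorff distances between isometric images of $X$ and $Y$ in a common metric space $Z$, over all such $Z$ and isometric embeddings. *)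

theory Defs
  imports "HOL-Analysis.Analysis"
begin

definition rho :: "real \<Rightarrow> real \<Rightarrow> real" where
  "rho q x = sqrt (1 - q powr (2 * (x + 1))) / ((1 - q\<^sup>2) * q powr x)"

definition Xq :: "real \<Rightarrow> real set" where
  "Xq q = insert 0 (range (\<lambda>k::nat. q ^ (2 * k)))"

definition qidx :: "real \<Rightarrow> real \<Rightarrow> nat" where
  "qidx q x = (THE n. x = q ^ (2 * n))"

text \<open>The metric d_q on X_q (values outside X_q are irrelevant).\<close>
definition dq :: "real \<Rightarrow> real \<Rightarrow> real \<Rightarrow> real" where
  "dq q x y =
    (if x = y then 0
     else if y = 0 then (\<Sum>j. 1 / rho q (real (j + qidx q x)))
     else if x = 0 then (\<Sum>j. 1 / rho q (real (j + qidx q y)))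
     else (\<Sum>k = min (qidx q x) (qidx q y) ..< max (qidx q x) (qidx q y). 1 / rho q (real k)))"

definition metric_on :: "'a set \<Rightarrow> ('a \<Rightarrow> 'a \<Rightarrow> real) \<Rightarrow> bool" where
  "metric_on S d \<longleftrightarrow>
     (\<forall>x\<in>S. \<forall>y\<in>S. 0 \<le> d x y \<and> (d x y = 0 \<longleftrightarrow> x = y) \<and> d x y = d y x) \<and>
     (\<forall>x\<in>S. \<forall>y\<in>S. \<forall>z\<in>S. d x z \<le> d x y + d y z)"

definition hausdorff_d :: "('a \<Rightarrow> 'a \<Rightarrow> real) \<Rightarrow> 'a set \<Rightarrow> 'a set \<Rightarrow> real" where
  "hausdorff_d d A B =
     max (SUP a\<in>A. INF b\<in>B. d a b) (SUP b\<in>B. INF a\<in>A. d a b)"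

definition admissible_metric ::
  "'a set \<Rightarrow> ('a \<Rightarrow> 'a \<Rightarrow> real) \<Rightarrow> 'b set \<Rightarrow> ('b \<Rightarrow> 'b \<Rightarrow> real) \<Rightarrow> ('a + 'b \<Rightarrow> 'a + 'b \<Rightarrow> real) \<Rightarrow> bool" where
  "admissible_metric X dX Y dY d \<longleftrightarrow>
     metric_on (Inl ` X \<union> Inr ` Y) d \<and>
     (\<forall>x\<in>X. \<forall>x'\<in>X. d (Inl x) (Inl x') = dX x x') \<and>
     (\<forall>y\<in>Y. \<forall>y'\<in>Y. d (Inr y) (Inr y') = dY y y')"

definition GH_dist ::
  "'a set \<Rightarrow> ('a \<Rightarrow> 'a \<Rightarrow> real) \<Rightarrow> 'b set \<Rightarrow> ('b \<Rightarrow> 'b \<Rightarrow> real) \<Rightarrow> real" where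
  "GH_dist X dX Y dY =
     Inf {hausdorff_d d (Inl ` X) (Inr ` Y) | d. admissible_metric X dX Y dY d}"

end

theory Submission
  imports Defs
begin

text \<open>
  The map \<open>x \<mapsto> d\<^sub>q(x, 0)\<close> embeds \<open>X\<^sub>q\<close> isometrically into the real line, sending
  \<open>q\<^sup>2\<^sup>n\<close> to the tail sum \<open>T\<^sub>q(n) = \<Sum>\<^sub>k\<^sub>\<ge>\<^sub>n 1/\<rho>\<^sub>q(k)\<close>. Two subsets of the line that are
  \<open>h\<close>-dense in each other are at Gromov-Hausdorff distance at most \<open>h\<close>: glue the two
  copies of the line at distance \<open>\<delta>\<close> and let \<open>\<delta> \<rightarrow> 0\<close>.
  Continuity in \<open>q\<close> holds because finitely many of the terms \<open>1/\<rho>\<^sub>q(k)\<close> vary continuously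
  while the tails are uniformly geometrically small. As \<open>q \<rightarrow> 1\<close> the gaps
  \<open>1/\<rho>\<^sub>q(k) \<le> \<surd>(1 - q\<^sup>2)\<close> shrink, and comparing \<open>1/\<rho>\<^sub>q(k)\<close> with increments of
  \<open>arcsin (q\<^sup>k)\<close> by the mean value theorem squeezes the diameter \<open>T\<^sub>q(0)\<close> between
  \<open>(1 + q)/q \<cdot> arcsin q\<close> and \<open>(1 + q) \<pi>/2\<close>, so the image fills \<open>[0, \<pi>]\<close>.
\<close>

definition gap :: "real \<Rightarrow> nat \<Rightarrow> real" where
  "gap q k = 1 / rho q (real k)"

definition tail :: "real \<Rightarrow> nat \<Rightarrow> real" where
  "tail q n = (\<Sum>j. gap q (j + n))"

lemma gap_eq:
  assumes "0 < q" "q < 1"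
  shows "gap q k = (1 - q\<^sup>2) * q ^ k / sqrt (1 - q ^ (2 * k + 2))"
proof -
  have "q powr (2 * (real k + 1)) = q powr real (2 * k + 2)"
    by (rule arg_cong[where f = "\<lambda>x. q powr x"]) simp
  also have "\<dots> = q ^ (2 * k + 2)"
    using assms(1) by (rule powr_realpow)
  finally show ?thesis
    unfolding gap_def rho_def using powr_realpow[OF assms(1), of k] by simp
qed

lemma one_minus_even_power_bounds:
  fixes q :: real
  assumes "0 < q" "q < 1"
  shows "0 < 1 - q ^ (2 * k + 2)" "1 - q\<^sup>2 \<le> 1 - q ^ (2 * k + 2)"
proof -
  show "0 < 1 - q ^ (2 * k + 2)"
    using assms power_Suc_less_one[of q "2 * k + 1"] by simp
  have "q ^ (2 * k + 2) = q\<^sup>2 * q ^ (2 * k)"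
    by (simp add: power_add power2_eq_square mult.commute)
  also have "\<dots> \<le> q\<^sup>2"
    using assms by (simp add: power_le_one mult_left_le)
  finally show "1 - q\<^sup>2 \<le> 1 - q ^ (2 * k + 2)" by simp
qed

lemma gap_pos:
  assumes "0 < q" "q < 1"
  shows "0 < gap q k"
proof -
  have "q\<^sup>2 < 1" using assms by (simp add: power_less_one_iff)
  then show ?thesis
    using gap_eq[OF assms] one_minus_even_power_bounds[OF assms, of k] assms by simp
qed

lemma gap_le_sqrt_mult_power:
  assumes "0 < q" "q < 1"
  shows "gap q k \<le> sqrt (1 - q\<^sup>2) * q ^ k"
proof -
  have q2: "0 < 1 - q\<^sup>2" using assms by (simp add: power_less_one_iff)
  have "sqrt (1 - q\<^sup>2) \<le> sqrt (1 - q ^ (2 * k + 2))"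
    using one_minus_even_power_bounds[OF assms, of k] by simp
  then have "gap q k \<le> (1 - q\<^sup>2) * q ^ k / sqrt (1 - q\<^sup>2)"
    unfolding gap_eq[OF assms] using q2 assms by (intro divide_left_mono) auto
  also have "\<dots> = sqrt (1 - q\<^sup>2) * q ^ k"
    using q2 real_div_sqrt[of "1 - q\<^sup>2"] by (simp add: field_simps)
  finally show ?thesis .
qed

lemma gap_le_power:
  assumes "0 < q" "q < 1"
  shows "gap q k \<le> q ^ k"
proof -
  have "sqrt (1 - q\<^sup>2) * q ^ k \<le> 1 * q ^ k"
    using assms by (intro mult_right_mono) auto
  then show ?thesis using gap_le_sqrt_mult_power[OF assms, of k] by simp
qed

lemma gap_le_sqrt:
  assumes "0 < q" "q < 1"
  shows "gap q k \<le> sqrt (1 - q\<^sup>2)"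
proof -
  have "sqrt (1 - q\<^sup>2) * q ^ k \<le> sqrt (1 - q\<^sup>2) * 1"
    using assms by (intro mult_left_mono) (auto simp: power_le_one)
  then show ?thesis using gap_le_sqrt_mult_power[OF assms, of k] by simp
qed

lemma summable_gap_shift:
  assumes "0 < q" "q < 1"
  shows "summable (\<lambda>j. gap q (j + n))"
proof (rule summable_comparison_test'[where g = "\<lambda>j. q ^ j * q ^ n"])
  show "summable (\<lambda>j. q ^ j * q ^ n)"
    using assms by (intro summable_mult2 summable_geometric) simp
  show "norm (gap q (j + n)) \<le> q ^ j * q ^ n" for j
    using gap_pos[OF assms, of "j + n"] gap_le_power[OF assms, of "j + n"]
    by (simp add: power_add)
qed

lemma tail_le_power:
  assumes "0 < q" "q < 1"
  shows "tail q n \<le> q ^ n / (1 - q)"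
proof -
  have geom: "summable (\<lambda>j. q ^ j)" using assms by (intro summable_geometric) simp
  have "tail q n \<le> (\<Sum>j. q ^ j * q ^ n)"
    unfolding tail_def
    using assms summable_gap_shift[OF assms] gap_le_power[OF assms]
    by (intro suminf_le) (simp_all add: power_add[symmetric])
  also have "\<dots> = q ^ n / (1 - q)"
    using assms by (simp add: suminf_mult2[OF geom, symmetric] suminf_geometric)
  finally show ?thesis .
qed

lemma tail_pos:
  assumes "0 < q" "q < 1"
  shows "0 < tail q n"
  unfolding tail_def using summable_gap_shift[OF assms] gap_pos[OF assms]
  by (intro suminf_pos) auto

lemma tail_Suc:
  assumes "0 < q" "q < 1"
  shows "tail q n = gap q n + tail q (Suc n)"
  using suminf_split_head[OF summable_gap_shift[OF assms, of n]] by (simp add: tail_def)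

lemma tail_eq_sum_plus_tail:
  assumes "0 < q" "q < 1" "n \<le> m"
  shows "tail q n = (\<Sum>k=n..<m. gap q k) + tail q m"
  using assms(3)
proof (induction m rule: dec_induct)
  case (step m)
  then show ?case using tail_Suc[OF assms(1,2), of m] by simp
qed simp

lemma tail_antimono:
  assumes "0 < q" "q < 1" "n \<le> m"
  shows "tail q m \<le> tail q n"
  using tail_eq_sum_plus_tail[OF assms] gap_pos[OF assms(1,2)]
  by (simp add: sum_nonneg less_imp_le)

lemma tail_strict_antimono:
  assumes "0 < q" "q < 1" "n < m"
  shows "tail q m < tail q n"
  using tail_antimono[OF assms(1,2), of "Suc n" m] assms(3)
    tail_Suc[OF assms(1,2), of n] gap_pos[OF assms(1,2), of n]
  by simp

lemma inj_tail:
  assumes "0 < q" "q < 1"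
  shows "inj (tail q)"
  by (rule injI) (metis tail_strict_antimono[OF assms] less_irrefl linorder_neqE_nat)

lemma arcsin_diff_MVT:
  fixes a b :: real
  assumes "0 \<le> a" "a < b" "b \<le> 1"
  obtains z where "a < z" "z < b" "arcsin b - arcsin a = (b - a) / sqrt (1 - z\<^sup>2)"
proof -
  have "continuous_on {a..b} arcsin"
    using continuous_on_subset[OF continuous_on_arcsin'] assms by auto
  moreover have "arcsin differentiable (at x)" if "a < x" "x < b" for x
    using DERIV_arcsin[of x] that assms by (auto simp: real_differentiable_def)
  ultimately obtain l z where z: "a < z" "z < b" "DERIV arcsin z :> l"
      "arcsin b - arcsin a = (b - a) * l"
    using MVT[OF assms(2)] by blast
  have "DERIV arcsin z :> inverse (sqrt (1 - z\<^sup>2))"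
    using z assms by (intro DERIV_arcsin) auto
  then have "l = inverse (sqrt (1 - z\<^sup>2))" using z(3) by (rule DERIV_unique[rotated])
  then show ?thesis using that z by (simp add: divide_inverse)
qed

lemma arcsin_diff_ge:
  fixes a b :: real
  assumes "0 \<le> a" "a < b" "b \<le> 1"
  shows "(b - a) / sqrt (1 - a\<^sup>2) \<le> arcsin b - arcsin a"
proof -
  obtain z where z: "a < z" "z < b" "arcsin b - arcsin a = (b - a) / sqrt (1 - z\<^sup>2)"
    using arcsin_diff_MVT[OF assms] .
  have "a\<^sup>2 < z\<^sup>2" using z assms by (intro power_strict_mono) auto
  moreover have "z\<^sup>2 < 1" using z assms by (simp add: abs_square_less_1)
  ultimately have "sqrt (1 - z\<^sup>2) \<le> sqrt (1 - a\<^sup>2)" "0 < sqrt (1 - z\<^sup>2)" by auto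
  then show ?thesis unfolding z(3) using assms by (intro divide_left_mono) auto
qed

lemma arcsin_diff_le:
  fixes a b :: real
  assumes "0 \<le> a" "a < b" "b < 1"
  shows "arcsin b - arcsin a \<le> (b - a) / sqrt (1 - b\<^sup>2)"
proof -
  obtain z where z: "a < z" "z < b" "arcsin b - arcsin a = (b - a) / sqrt (1 - z\<^sup>2)"
    using arcsin_diff_MVT[of a b] assms by auto
  have "z\<^sup>2 < b\<^sup>2" using z assms by (intro power_strict_mono) auto
  moreover have "b\<^sup>2 < 1" using assms by (simp add: abs_square_less_1)
  ultimately have "sqrt (1 - b\<^sup>2) \<le> sqrt (1 - z\<^sup>2)" "0 < sqrt (1 - b\<^sup>2)" by auto
  then show ?thesis unfolding z(3) using assms by (intro divide_left_mono) auto
qed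

lemma gap_eq_scaled_difference_quotient:
  assumes "0 < q" "q < 1"
  shows "gap q k = (1 + q) * ((q ^ k - q ^ Suc k) / sqrt (1 - (q ^ Suc k)\<^sup>2))"
proof -
  have "(q ^ Suc k)\<^sup>2 = q ^ (Suc k * 2)"
    by (simp only: power_mult)
  also have "Suc k * 2 = 2 * k + 2" by simp
  finally have "(q ^ Suc k)\<^sup>2 = q ^ (2 * k + 2)" .
  moreover have "(1 - q\<^sup>2) * q ^ k = (1 + q) * (q ^ k - q ^ Suc k)"
    by (simp add: algebra_simps power2_eq_square)
  ultimately show ?thesis using gap_eq[OF assms] by simp
qed

lemma gap_le_arcsin_diff:
  assumes "0 < q" "q < 1"
  shows "gap q k \<le> (1 + q) * (arcsin (q ^ k) - arcsin (q ^ Suc k))"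
proof -
  have "(q ^ k - q ^ Suc k) / sqrt (1 - (q ^ Suc k)\<^sup>2) \<le> arcsin (q ^ k) - arcsin (q ^ Suc k)"
    using assms by (intro arcsin_diff_ge) (auto simp: power_le_one)
  then have "(1 + q) * ((q ^ k - q ^ Suc k) / sqrt (1 - (q ^ Suc k)\<^sup>2))
      \<le> (1 + q) * (arcsin (q ^ k) - arcsin (q ^ Suc k))"
    by (rule mult_left_mono) (use assms in simp)
  then show ?thesis unfolding gap_eq_scaled_difference_quotient[OF assms] .
qed

lemma arcsin_diff_le_gap:
  assumes "0 < q" "q < 1"
  shows "(1 + q) / q * (arcsin (q ^ Suc k) - arcsin (q ^ Suc (Suc k))) \<le> gap q k"
proof -
  have "arcsin (q ^ Suc k) - arcsin (q ^ Suc (Suc k))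
      \<le> (q ^ Suc k - q ^ Suc (Suc k)) / sqrt (1 - (q ^ Suc k)\<^sup>2)"
    using assms power_Suc_less_one[of q k] by (intro arcsin_diff_le) auto
  then have "(1 + q) / q * (arcsin (q ^ Suc k) - arcsin (q ^ Suc (Suc k)))
      \<le> (1 + q) / q * ((q ^ Suc k - q ^ Suc (Suc k)) / sqrt (1 - (q ^ Suc k)\<^sup>2))"
    by (rule mult_left_mono) (use assms in simp)
  also have "q ^ Suc k - q ^ Suc (Suc k) = q * (q ^ k - q ^ Suc k)"
    by (simp add: algebra_simps)
  finally show ?thesis
    unfolding gap_eq_scaled_difference_quotient[OF assms] using assms by simp
qed

lemma LIMSEQ_arcsin_power:
  fixes q :: real
  assumes "0 < q" "q < 1"
  shows "(\<lambda>n. arcsin (q ^ n)) \<longlonglongrightarrow> 0"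
proof -
  have "(\<lambda>n. arcsin (q ^ n)) \<longlonglongrightarrow> arcsin 0"
    using assms by (intro isCont_tendsto_compose[OF isCont_arcsin] LIMSEQ_power_zero) auto
  then show ?thesis by simp
qed

lemma gap_sums_tail_zero:
  assumes "0 < q" "q < 1"
  shows "gap q sums tail q 0"
  using summable_gap_shift[OF assms, of 0] by (simp add: tail_def summable_sums)

text \<open>The bounds telescope because \<open>arcsin (q\<^sup>n) \<rightarrow> 0\<close> and \<open>arcsin 1 = \<pi>/2\<close>.\<close>

lemma tail_zero_le:
  assumes "0 < q" "q < 1"
  shows "tail q 0 \<le> (1 + q) * (pi / 2)"
proof -
  have "(\<lambda>n. arcsin (q ^ n) - arcsin (q ^ Suc n)) sums (arcsin (q ^ 0) - 0)"
    by (rule telescope_sums'[OF LIMSEQ_arcsin_power[OF assms]])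
  from sums_mult[OF this, of "1 + q"]
  have "(\<lambda>n. (1 + q) * (arcsin (q ^ n) - arcsin (q ^ Suc n))) sums ((1 + q) * (pi / 2))"
    by simp
  with gap_le_arcsin_diff[OF assms] gap_sums_tail_zero[OF assms] show ?thesis
    by (rule sums_le)
qed

lemma tail_zero_ge:
  assumes "0 < q" "q < 1"
  shows "(1 + q) / q * arcsin q \<le> tail q 0"
proof -
  have "(\<lambda>n. arcsin (q ^ Suc n) - arcsin (q ^ Suc (Suc n))) sums (arcsin (q ^ Suc 0) - 0)"
    by (rule telescope_sums'[OF LIMSEQ_Suc[OF LIMSEQ_arcsin_power[OF assms]]])
  from sums_mult[OF this, of "(1 + q) / q"]
  have "(\<lambda>n. (1 + q) / q * (arcsin (q ^ Suc n) - arcsin (q ^ Suc (Suc n))))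
      sums ((1 + q) / q * arcsin q)"
    by simp
  from arcsin_diff_le_gap[OF assms] this gap_sums_tail_zero[OF assms] show ?thesis
    by (rule sums_le)
qed

lemma tendsto_arcsin_at_left_one: "(arcsin \<longlongrightarrow> pi / 2) (at_left (1::real))"
proof -
  have "(arcsin \<longlongrightarrow> arcsin 1) (at 1 within {-1..1::real})"
    using continuous_on_arcsin' unfolding continuous_on_def by (rule bspec) simp
  then show ?thesis by (simp add: at_within_Icc_at_left)
qed

lemma tendsto_tail_zero_pi: "((\<lambda>q. tail q 0) \<longlongrightarrow> pi) (at_left 1)"
proof (rule tendsto_sandwich)
  have q: "eventually (\<lambda>q. 0 < q \<and> q < (1::real)) (at_left 1)"
    by (rule eventually_at_leftI[of 0]) auto
  show "eventually (\<lambda>q. (1 + q) / q * arcsin q \<le> tail q 0) (at_left 1)"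
    using q by eventually_elim (use tail_zero_ge in auto)
  show "eventually (\<lambda>q. tail q 0 \<le> (1 + q) * (pi / 2)) (at_left 1)"
    using q by eventually_elim (use tail_zero_le in auto)
  have "((\<lambda>q::real. (1 + q) * (pi / 2)) \<longlongrightarrow> (1 + 1) * (pi / 2)) (at_left 1)"
    by (intro tendsto_intros)
  then show "((\<lambda>q::real. (1 + q) * (pi / 2)) \<longlongrightarrow> pi) (at_left 1)" by simp
  have "((\<lambda>q::real. (1 + q) / q * arcsin q) \<longlongrightarrow> (1 + 1) / 1 * (pi / 2)) (at_left 1)"
    by (intro tendsto_intros tendsto_arcsin_at_left_one) auto
  then show "((\<lambda>q::real. (1 + q) / q * arcsin q) \<longlongrightarrow> pi) (at_left 1)" by simp
qed

lemma Xq_cases: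
  assumes "x \<in> Xq q"
  obtains "x = 0" | n where "x = q ^ (2 * n)"
  using assms unfolding Xq_def by auto

lemma zero_in_Xq: "0 \<in> Xq q"
  by (simp add: Xq_def)

lemma qidx_power:
  assumes "0 < q" "q < 1"
  shows "qidx q (q ^ (2 * n)) = n"
proof -
  have "a = b" if "q ^ a = q ^ b" for a b :: nat
    using that power_strict_decreasing[of a b q] power_strict_decreasing[of b a q] assms
    by (cases a b rule: linorder_cases) auto
  then have "m = n" if "q ^ (2 * n) = q ^ (2 * m)" for m
    using that by fastforce
  then show ?thesis unfolding qidx_def by (intro the_equality) auto
qed

lemma dq_self [simp]: "dq q x x = 0"
  by (simp add: dq_def)

lemma dq_power_zero:
  assumes "0 < q" "q < 1"
  shows "dq q (q ^ (2 * n)) 0 = tail q n" "dq q 0 (q ^ (2 * n)) = tail q n"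
  using assms by (simp_all add: dq_def qidx_power tail_def gap_def)

lemma dq_power_power:
  assumes "0 < q" "q < 1"
  shows "dq q (q ^ (2 * n)) (q ^ (2 * m)) = \<bar>tail q n - tail q m\<bar>"
proof -
  have tail_diff: "tail q i - tail q j = (\<Sum>k=i..<j. gap q k)" "0 \<le> tail q i - tail q j"
    if "i \<le> j" for i j
    using tail_eq_sum_plus_tail[OF assms that] tail_antimono[OF assms that] by simp_all
  show ?thesis
  proof (cases "n = m")
    case False
    then have "q ^ (2 * n) \<noteq> q ^ (2 * m)"
      using qidx_power[OF assms] by metis
    then show ?thesis
      using assms tail_diff[of n m] tail_diff[of m n]
      by (cases "n \<le> m") (simp_all add: dq_def qidx_power gap_def min_def max_def)
  qed (simp add: dq_def)
qed

lemma dq_eq_abs_diff_dq_zero: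
  assumes "0 < q" "q < 1" "x \<in> Xq q" "y \<in> Xq q"
  shows "dq q x y = \<bar>dq q x 0 - dq q y 0\<bar>"
proof -
  have "0 \<le> tail q n" for n
    using tail_pos[OF assms(1,2)] by (rule less_imp_le)
  with assms(3,4) show ?thesis
    by (elim Xq_cases; simp only: dq_self dq_power_zero[OF assms(1,2)] dq_power_power[OF assms(1,2)])
      simp_all
qed

lemma dq_zero_image:
  assumes "0 < q" "q < 1"
  shows "(\<lambda>x. dq q x 0) ` Xq q = insert 0 (range (tail q))"
  by (simp add: Xq_def image_image dq_power_zero[OF assms])

lemma dq_zero_image_subset:
  assumes "0 < q" "q < 1"
  shows "(\<lambda>x. dq q x 0) ` Xq q \<subseteq> {0..tail q 0}"
  using tail_pos[OF assms] tail_antimono[OF assms]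
  by (auto simp: dq_zero_image[OF assms] less_imp_le)

lemma inj_on_dq_zero:
  assumes "0 < q" "q < 1"
  shows "inj_on (\<lambda>x. dq q x 0) (Xq q)"
proof (rule inj_onI)
  fix x y assume "x \<in> Xq q" "y \<in> Xq q" "dq q x 0 = dq q y 0"
  moreover have "tail q n \<noteq> 0" for n
    using tail_pos[OF assms, of n] by simp
  ultimately show "x = y"
    using inj_tail[OF assms]
    by (elim Xq_cases; simp only: dq_self dq_power_zero[OF assms]) (auto simp: inj_eq)
qed

text \<open>The summand \<open>\<delta>\<close> separates the two copies, so distinct points keep positive distance.\<close>

definition glued_line_metric ::
  "('a \<Rightarrow> real) \<Rightarrow> ('b \<Rightarrow> real) \<Rightarrow> real \<Rightarrow> 'a + 'b \<Rightarrow> 'a + 'b \<Rightarrow> real" where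
  "glued_line_metric f g \<delta> u v =
     \<bar>case_sum f g u - case_sum f g v\<bar> + (if isl u = isl v then 0 else \<delta>)"

lemma admissible_glued_line_metric:
  assumes dX: "\<And>x x'. x \<in> X \<Longrightarrow> x' \<in> X \<Longrightarrow> dX x x' = \<bar>f x - f x'\<bar>"
    and dY: "\<And>y y'. y \<in> Y \<Longrightarrow> y' \<in> Y \<Longrightarrow> dY y y' = \<bar>g y - g y'\<bar>"
    and inj: "inj_on f X" "inj_on g Y"
    and "0 < \<delta>"
  shows "admissible_metric X dX Y dY (glued_line_metric f g \<delta>)"
proof -
  let ?D = "glued_line_metric f g \<delta>"
  have zero_iff: "?D u v = 0 \<longleftrightarrow> u = v" if "u \<in> Inl ` X \<union> Inr ` Y" "v \<in> Inl ` X \<union> Inr ` Y" for u v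
    using that \<open>0 < \<delta>\<close> inj
    by (auto simp: glued_line_metric_def inj_on_eq_iff add_nonneg_eq_0_iff)
  have "?D u w \<le> ?D u v + ?D v w" for u v w
    using \<open>0 < \<delta>\<close> abs_triangle_ineq4[of "case_sum f g u - case_sum f g v" "case_sum f g w - case_sum f g v"]
    by (auto simp: glued_line_metric_def)
  moreover have "0 \<le> ?D u v" "?D u v = ?D v u" for u v
    using \<open>0 < \<delta>\<close> by (auto simp: glued_line_metric_def abs_minus_commute)
  moreover have "?D (Inl x) (Inl x') = dX x x'" if "x \<in> X" "x' \<in> X" for x x'
    using dX[OF that] by (simp add: glued_line_metric_def)
  moreover have "?D (Inr y) (Inr y') = dY y y'" if "y \<in> Y" "y' \<in> Y" for y y'
    using dY[OF that] by (simp add: glued_line_metric_def)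
  ultimately show ?thesis
    using zero_iff unfolding admissible_metric_def metric_on_def by blast
qed

lemma hausdorff_d_glued_line_metric_le:
  assumes "X \<noteq> {}" "Y \<noteq> {}" "0 \<le> \<delta>"
    and cover_X: "\<And>s. s \<in> f ` X \<Longrightarrow> \<exists>t\<in>g ` Y. \<bar>s - t\<bar> \<le> h"
    and cover_Y: "\<And>t. t \<in> g ` Y \<Longrightarrow> \<exists>s\<in>f ` X. \<bar>s - t\<bar> \<le> h"
  shows "hausdorff_d (glued_line_metric f g \<delta>) (Inl ` X) (Inr ` Y) \<le> h + \<delta>"
proof -
  let ?D = "glued_line_metric f g \<delta>"
  have bdd: "bdd_below ((\<lambda>v. ?D u v) ` S)" "bdd_below ((\<lambda>u. ?D u v) ` S)" for u v S
    using \<open>0 \<le> \<delta>\<close> by (auto intro!: bdd_belowI[of _ 0] simp: glued_line_metric_def)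
  have "(INF b\<in>Inr ` Y. ?D (Inl x) b) \<le> h + \<delta>" if x: "x \<in> X" for x
  proof -
    obtain y where "y \<in> Y" "\<bar>f x - g y\<bar> \<le> h" using cover_X[of "f x"] x by blast
    then show ?thesis
      by (intro cINF_lower2[OF bdd(1), of "Inr y"]) (auto simp: glued_line_metric_def)
  qed
  moreover have "(INF a\<in>Inl ` X. ?D a (Inr y)) \<le> h + \<delta>" if y: "y \<in> Y" for y
  proof -
    obtain x where "x \<in> X" "\<bar>f x - g y\<bar> \<le> h" using cover_Y[of "g y"] y by blast
    then show ?thesis
      by (intro cINF_lower2[OF bdd(2), of "Inl x"]) (auto simp: glued_line_metric_def)
  qed
  ultimately show ?thesis
    using assms(1,2) unfolding hausdorff_d_def by (auto intro!: cSUP_least)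
qed

lemma hausdorff_d_nonneg:
  assumes adm: "admissible_metric X dX Y dY d"
    and "X \<noteq> {}" "Y \<noteq> {}"
    and bounded: "\<And>x x'. x \<in> X \<Longrightarrow> x' \<in> X \<Longrightarrow> dX x x' \<le> M"
  shows "0 \<le> hausdorff_d d (Inl ` X) (Inr ` Y)"
proof -
  obtain x0 y0 where x0: "x0 \<in> X" and y0: "y0 \<in> Y" using assms(2,3) by blast
  have metric: "metric_on (Inl ` X \<union> Inr ` Y) d"
    and restr: "\<And>x x'. x \<in> X \<Longrightarrow> x' \<in> X \<Longrightarrow> d (Inl x) (Inl x') = dX x x'"
    using adm by (auto simp: admissible_metric_def)
  have nonneg: "0 \<le> d (Inl x) (Inr y)" if "x \<in> X" "y \<in> Y" for x y
    using metric that unfolding metric_on_def by blast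
  have "(INF b\<in>Inr ` Y. d (Inl x) b) \<le> M + d (Inl x0) (Inr y0)" if x: "x \<in> X" for x
  proof -
    have "(INF b\<in>Inr ` Y. d (Inl x) b) \<le> d (Inl x) (Inr y0)"
      using nonneg x y0 by (intro cINF_lower bdd_belowI[of _ 0]) auto
    also have "\<dots> \<le> d (Inl x) (Inl x0) + d (Inl x0) (Inr y0)"
      using metric x x0 y0 unfolding metric_on_def by blast
    also have "\<dots> \<le> M + d (Inl x0) (Inr y0)"
      using restr[OF x x0] bounded[OF x x0] by simp
    finally show ?thesis .
  qed
  then have "bdd_above ((\<lambda>a. INF b\<in>Inr ` Y. d a b) ` Inl ` X)"
    by (intro bdd_aboveI[of _ "M + d (Inl x0) (Inr y0)"]) auto
  moreover have "0 \<le> (INF b\<in>Inr ` Y. d (Inl x0) b)"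
    using nonneg x0 assms(3) by (intro cINF_greatest) auto
  ultimately have "0 \<le> (SUP a\<in>Inl ` X. INF b\<in>Inr ` Y. d a b)"
    using x0 by (intro cSUP_upper2[of _ _ "Inl x0"]) auto
  then show ?thesis unfolding hausdorff_d_def by simp
qed

lemma GH_dist_le_line_embeddings:
  assumes "X \<noteq> {}" "Y \<noteq> {}"
    and dX: "\<And>x x'. x \<in> X \<Longrightarrow> x' \<in> X \<Longrightarrow> dX x x' = \<bar>f x - f x'\<bar>"
    and dY: "\<And>y y'. y \<in> Y \<Longrightarrow> y' \<in> Y \<Longrightarrow> dY y y' = \<bar>g y - g y'\<bar>"
    and inj: "inj_on f X" "inj_on g Y"
    and "bounded (f ` X)"
    and cover_X: "\<And>s. s \<in> f ` X \<Longrightarrow> \<exists>t\<in>g ` Y. \<bar>s - t\<bar> \<le> h"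
    and cover_Y: "\<And>t. t \<in> g ` Y \<Longrightarrow> \<exists>s\<in>f ` X. \<bar>s - t\<bar> \<le> h"
  shows "0 \<le> GH_dist X dX Y dY" "GH_dist X dX Y dY \<le> h"
proof -
  define S where "S = {hausdorff_d d (Inl ` X) (Inr ` Y) | d. admissible_metric X dX Y dY d}"
  have glued_in_S: "hausdorff_d (glued_line_metric f g \<delta>) (Inl ` X) (Inr ` Y) \<in> S" if "0 < \<delta>" for \<delta>
    unfolding S_def using admissible_glued_line_metric[OF dX dY inj that] by blast
  obtain M where M: "\<And>x. x \<in> X \<Longrightarrow> \<bar>f x\<bar> \<le> M"
    using \<open>bounded (f ` X)\<close> by (auto simp: bounded_iff)
  have "dX x x' \<le> 2 * M" if "x \<in> X" "x' \<in> X" for x x'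
    using dX[OF that] M[OF that(1)] M[OF that(2)] by simp
  then have S_nonneg: "0 \<le> s" if "s \<in> S" for s
    using that hausdorff_d_nonneg[OF _ assms(1,2)] unfolding S_def by blast
  show "0 \<le> GH_dist X dX Y dY"
    unfolding GH_dist_def S_def[symmetric] using glued_in_S[of 1] S_nonneg
    by (intro cInf_greatest) auto
  show "GH_dist X dX Y dY \<le> h"
    unfolding GH_dist_def S_def[symmetric]
  proof (rule field_le_epsilon)
    fix \<delta> :: real assume "0 < \<delta>"
    have "Inf S \<le> hausdorff_d (glued_line_metric f g \<delta>) (Inl ` X) (Inr ` Y)"
      using glued_in_S[OF \<open>0 < \<delta>\<close>] S_nonneg by (intro cInf_lower bdd_belowI[of _ 0]) auto
    also have "\<dots> \<le> h + \<delta>"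
      using \<open>0 < \<delta>\<close> by (intro hausdorff_d_glued_line_metric_le assms cover_X cover_Y) auto
    finally show "Inf S \<le> h + \<delta>" .
  qed
qed

lemma tail_le_power_uniform:
  assumes "0 < q" "q \<le> r" "r < 1"
  shows "tail q N \<le> r ^ N / (1 - r)"
proof -
  have "tail q N \<le> q ^ N / (1 - q)"
    using assms by (intro tail_le_power) auto
  also have "\<dots> \<le> r ^ N / (1 - r)"
    using assms by (intro frac_le power_mono) auto
  finally show ?thesis .
qed

lemma tendsto_gap:
  assumes "0 < q0" "q0 < 1"
  shows "((\<lambda>q. gap q k) \<longlongrightarrow> gap q0 k) (at q0)"
proof -
  have "sqrt (1 - q0 ^ (2 * k + 2)) \<noteq> 0"
    using one_minus_even_power_bounds(1)[OF assms, of k] by simp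
  then have "((\<lambda>q. (1 - q\<^sup>2) * q ^ k / sqrt (1 - q ^ (2 * k + 2))) \<longlongrightarrow> gap q0 k) (at q0)"
    unfolding gap_eq[OF assms] by (intro tendsto_intros)
  moreover have "eventually (\<lambda>q. q \<in> {0<..<1::real}) (at q0)"
    using assms by (intro eventually_at_in_open') auto
  then have "eventually (\<lambda>q. (1 - q\<^sup>2) * q ^ k / sqrt (1 - q ^ (2 * k + 2)) = gap q k) (at q0)"
    by eventually_elim (simp add: gap_eq)
  ultimately show ?thesis by (rule Lim_transform_eventually)
qed

text \<open>Points \<open>T\<^sub>q(n)\<close> with \<open>n \<le> N\<close> are matched with \<open>T\<^sub>p(n)\<close>, all others with \<open>0\<close>.\<close>

lemma tails_close:
  assumes q: "0 < q" "q < 1" and p: "0 < p" "p < 1"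
    and s: "s \<in> insert 0 (range (tail q))"
  shows "\<exists>t\<in>insert 0 (range (tail p)).
           \<bar>s - t\<bar> \<le> (\<Sum>k<N. \<bar>gap q k - gap p k\<bar>) + tail q N + tail p N"
proof -
  have sum_abs_nonneg: "0 \<le> (\<Sum>k<N. \<bar>gap q k - gap p k\<bar>)" by (simp add: sum_nonneg)
  have tails_pos: "0 < tail q N" "0 < tail p N" using tail_pos q p by auto
  from s consider "s = 0" | n where "s = tail q n" "n \<le> N" | n where "s = tail q n" "N < n"
    by (metis image_iff insert_iff not_le)
  then show ?thesis
  proof cases
    case 1
    then show ?thesis using sum_abs_nonneg tails_pos by (intro bexI[of _ 0]) auto
  next
    case (2 n)
    have "\<bar>tail q n - tail p n\<bar> = \<bar>(\<Sum>k=n..<N. gap q k - gap p k) + (tail q N - tail p N)\<bar>"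
      using tail_eq_sum_plus_tail[OF q 2(2)] tail_eq_sum_plus_tail[OF p 2(2)]
      by (simp add: sum_subtractf)
    also have "\<dots> \<le> (\<Sum>k=n..<N. \<bar>gap q k - gap p k\<bar>) + (tail q N + tail p N)"
      using tails_pos by (intro abs_triangle_ineq[THEN order_trans] add_mono sum_abs) auto
    also have "(\<Sum>k=n..<N. \<bar>gap q k - gap p k\<bar>) \<le> (\<Sum>k<N. \<bar>gap q k - gap p k\<bar>)"
      by (intro sum_mono2) auto
    finally show ?thesis using 2(1) by (intro bexI[of _ "tail p n"]) auto
  next
    case (3 n)
    then have "\<bar>s - 0\<bar> \<le> tail q N"
      using tail_antimono[OF q, of N n] tail_pos[OF q, of n] by simp
    then have "\<bar>s - 0\<bar> \<le> (\<Sum>k<N. \<bar>gap q k - gap p k\<bar>) + tail q N + tail p N"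
      using sum_abs_nonneg tails_pos by linarith
    then show ?thesis by blast
  qed
qed

lemma GH_dist_Xq_Xq_le:
  assumes q: "0 < q" "q < 1" and p: "0 < p" "p < 1"
  shows "0 \<le> GH_dist (Xq q) (dq q) (Xq p) (dq p)"
    "GH_dist (Xq q) (dq q) (Xq p) (dq p)
       \<le> (\<Sum>k<N. \<bar>gap q k - gap p k\<bar>) + tail q N + tail p N"
proof -
  let ?h = "(\<Sum>k<N. \<bar>gap q k - gap p k\<bar>) + tail q N + tail p N"
  have cover_q: "\<exists>t\<in>(\<lambda>y. dq p y 0) ` Xq p. \<bar>s - t\<bar> \<le> ?h" if "s \<in> (\<lambda>x. dq q x 0) ` Xq q" for s
  proof -
    have "s \<in> insert 0 (range (tail q))"
      using that by (simp only: dq_zero_image[OF q])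
    then obtain t where "t \<in> insert 0 (range (tail p))" "\<bar>s - t\<bar> \<le> ?h"
      using tails_close[OF q p] by blast
    then show ?thesis by (simp only: dq_zero_image[OF p]) blast
  qed
  have cover_p: "\<exists>s\<in>(\<lambda>x. dq q x 0) ` Xq q. \<bar>s - t\<bar> \<le> ?h" if "t \<in> (\<lambda>y. dq p y 0) ` Xq p" for t
  proof -
    have "t \<in> insert 0 (range (tail p))"
      using that by (simp only: dq_zero_image[OF p])
    then obtain s where s: "s \<in> insert 0 (range (tail q))"
        "\<bar>t - s\<bar> \<le> (\<Sum>k<N. \<bar>gap p k - gap q k\<bar>) + tail p N + tail q N"
      using tails_close[OF p q] by blast
    have "(\<Sum>k<N. \<bar>gap p k - gap q k\<bar>) = (\<Sum>k<N. \<bar>gap q k - gap p k\<bar>)"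
      by (simp add: abs_minus_commute)
    then have "\<bar>s - t\<bar> \<le> ?h"
      using s(2) abs_minus_commute[of s t] by linarith
    with s(1) show ?thesis by (simp only: dq_zero_image[OF q]) blast
  qed
  have nonempty: "Xq q \<noteq> {}" "Xq p \<noteq> {}"
    using zero_in_Xq by auto
  have bounded: "bounded ((\<lambda>x. dq q x 0) ` Xq q)"
    using bounded_subset[OF bounded_closed_interval dq_zero_image_subset[OF q]] .
  show "0 \<le> GH_dist (Xq q) (dq q) (Xq p) (dq p)" "GH_dist (Xq q) (dq q) (Xq p) (dq p) \<le> ?h"
    using GH_dist_le_line_embeddings[where f = "\<lambda>x. dq q x 0" and g = "\<lambda>y. dq p y 0",
        OF nonempty dq_eq_abs_diff_dq_zero[OF q] dq_eq_abs_diff_dq_zero[OF p]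
          inj_on_dq_zero[OF q] inj_on_dq_zero[OF p] bounded cover_q cover_p]
    by simp_all
qed

lemma tendsto_GH_dist_Xq:
  assumes q0: "0 < q0" "q0 < 1"
  shows "((\<lambda>q. GH_dist (Xq q) (dq q) (Xq q0) (dq q0)) \<longlongrightarrow> 0) (at q0)"
proof (rule tendstoI)
  fix \<epsilon> :: real assume "0 < \<epsilon>"
  define r where "r = (1 + q0) / 2"
  have r: "q0 < r" "r < 1" using q0 unfolding r_def by auto
  obtain N where N: "r ^ N < \<epsilon> / 3 * (1 - r)"
    using real_arch_pow_inv[of "\<epsilon> / 3 * (1 - r)" r] r \<open>0 < \<epsilon>\<close> q0 by auto
  have "r ^ N / (1 - r) < \<epsilon> / 3"
    using N r by (simp add: divide_less_eq)
  then have small_tail: "tail q N < \<epsilon> / 3" if "0 < q" "q \<le> r" for q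
    using tail_le_power_uniform[OF that r(2), of N] by linarith
  have "((\<lambda>q. \<Sum>k<N. \<bar>gap q k - gap q0 k\<bar>) \<longlongrightarrow> (\<Sum>k<N. \<bar>gap q0 k - gap q0 k\<bar>)) (at q0)"
    by (intro tendsto_intros tendsto_gap[OF q0])
  then have "eventually (\<lambda>q. (\<Sum>k<N. \<bar>gap q k - gap q0 k\<bar>) < \<epsilon> / 3) (at q0)"
    using \<open>0 < \<epsilon>\<close> by (intro order_tendstoD(2)) auto
  moreover have "eventually (\<lambda>q. q \<in> {0<..<r}) (at q0)"
    using q0 r by (intro eventually_at_in_open') auto
  ultimately show "eventually (\<lambda>q. dist (GH_dist (Xq q) (dq q) (Xq q0) (dq q0)) 0 < \<epsilon>) (at q0)"
  proof eventually_elim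
    case (elim q)
    then have q: "0 < q" "q < 1" using r by auto
    have "GH_dist (Xq q) (dq q) (Xq q0) (dq q0) < \<epsilon> / 3 + \<epsilon> / 3 + \<epsilon> / 3"
      using GH_dist_Xq_Xq_le(2)[OF q q0, of N] elim small_tail[of q] small_tail[OF q0(1)] r
      by fastforce
    then show ?case using GH_dist_Xq_Xq_le(1)[OF q q0] by (simp add: dist_real_def)
  qed
qed

lemma tail_near:
  assumes q: "0 < q" "q < 1" and t: "0 < t" "t < tail q 0"
  shows "\<exists>n. \<bar>t - tail q n\<bar> \<le> sqrt (1 - q\<^sup>2)"
proof -
  obtain N where "q ^ N < t * (1 - q)"
    using real_arch_pow_inv[of "t * (1 - q)" q] q t by auto
  then have "q ^ N / (1 - q) < t"
    using q by (simp add: divide_less_eq)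
  then have "tail q N \<le> t"
    using tail_le_power[OF q, of N] by linarith
  define n where "n = (LEAST n. tail q n \<le> t)"
  have n: "tail q n \<le> t"
    unfolding n_def by (rule LeastI) fact
  then obtain k where k: "n = Suc k"
    using t by (cases n) auto
  have "\<not> tail q k \<le> t"
    using not_less_Least[of k "\<lambda>n. tail q n \<le> t"] k unfolding n_def by simp
  then have "t - tail q n < gap q k"
    using tail_Suc[OF q, of k] k by simp
  then show ?thesis
    using gap_le_sqrt[OF q, of k] n by (intro exI[of _ n]) simp
qed

lemma tails_close_to_interval:
  assumes q: "0 < q" "q < 1" and s: "0 \<le> s" "s \<le> tail q 0"
  shows "\<exists>t\<in>{0..pi}. \<bar>s - t\<bar> \<le> \<bar>tail q 0 - pi\<bar> + sqrt (1 - q\<^sup>2)"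
proof -
  have "\<bar>s - min s pi\<bar> \<le> \<bar>tail q 0 - pi\<bar>"
    using s by (cases "s \<le> pi") (simp_all add: min_def abs_if)
  moreover have "0 \<le> sqrt (1 - q\<^sup>2)"
    using q by (simp add: power_le_one)
  moreover have "min s pi \<in> {0..pi}"
    using s pi_gt_zero by auto
  ultimately show ?thesis
    by (intro bexI[of _ "min s pi"]) linarith+
qed

lemma interval_close_to_tails:
  assumes q: "0 < q" "q < 1" and t: "0 \<le> t" "t \<le> pi"
  shows "\<exists>s\<in>insert 0 (range (tail q)). \<bar>s - t\<bar> \<le> \<bar>tail q 0 - pi\<bar> + sqrt (1 - q\<^sup>2)"
proof -
  have sqrt_nonneg: "0 \<le> sqrt (1 - q\<^sup>2)"
    using q by (simp add: power_le_one)
  consider "t = 0" | "tail q 0 \<le> t" | "0 < t" "t < tail q 0"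
    using t by linarith
  then show ?thesis
  proof cases
    case 1
    then show ?thesis using sqrt_nonneg by auto
  next
    case 2
    then have "\<bar>tail q 0 - t\<bar> \<le> \<bar>tail q 0 - pi\<bar> + sqrt (1 - q\<^sup>2)"
      using t sqrt_nonneg by linarith
    then show ?thesis by blast
  next
    case 3
    then obtain n where "\<bar>t - tail q n\<bar> \<le> sqrt (1 - q\<^sup>2)"
      using tail_near[OF q] by blast
    then have "\<bar>tail q n - t\<bar> \<le> \<bar>tail q 0 - pi\<bar> + sqrt (1 - q\<^sup>2)"
      by (simp add: abs_minus_commute)
    then show ?thesis by blast
  qed
qed

lemma GH_dist_Xq_interval_le:
  assumes q: "0 < q" "q < 1"
  shows "0 \<le> GH_dist (Xq q) (dq q) {-pi/2..pi/2} (dist :: real \<Rightarrow> real \<Rightarrow> real)"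
    "GH_dist (Xq q) (dq q) {-pi/2..pi/2} (dist :: real \<Rightarrow> real \<Rightarrow> real)
       \<le> \<bar>tail q 0 - pi\<bar> + sqrt (1 - q\<^sup>2)"
proof -
  let ?h = "\<bar>tail q 0 - pi\<bar> + sqrt (1 - q\<^sup>2)"
  have interval: "(\<lambda>y. y + pi / 2) ` {-pi/2..pi/2} = {0..pi}"
    by (auto intro: image_eqI[of _ _ "t - pi / 2" for t])
  have cover_q: "\<exists>t\<in>(\<lambda>y. y + pi / 2) ` {-pi/2..pi/2}. \<bar>s - t\<bar> \<le> ?h"
    if "s \<in> (\<lambda>x. dq q x 0) ` Xq q" for s
    using that dq_zero_image_subset[OF q] tails_close_to_interval[OF q, of s]
    unfolding interval by auto
  have cover_interval: "\<exists>s\<in>(\<lambda>x. dq q x 0) ` Xq q. \<bar>s - t\<bar> \<le> ?h"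
    if "t \<in> (\<lambda>y. y + pi / 2) ` {-pi/2..pi/2}" for t
  proof -
    have "0 \<le> t" "t \<le> pi"
      using that unfolding interval by auto
    then show ?thesis
      using interval_close_to_tails[OF q] by (simp only: dq_zero_image[OF q])
  qed
  have nonempty: "Xq q \<noteq> {}" "{-pi/2..pi/2} \<noteq> {}"
    using zero_in_Xq by auto
  have bounded: "bounded ((\<lambda>x. dq q x 0) ` Xq q)"
    using bounded_subset[OF bounded_closed_interval dq_zero_image_subset[OF q]] .
  have dist_eq: "dist y y' = \<bar>(y + pi / 2) - (y' + pi / 2)\<bar>" for y y' :: real
    by (simp add: dist_real_def)
  have inj: "inj_on (\<lambda>y::real. y + pi / 2) {-pi/2..pi/2}"
    by (simp add: inj_on_def)
  show "0 \<le> GH_dist (Xq q) (dq q) {-pi/2..pi/2} (dist :: real \<Rightarrow> real \<Rightarrow> real)"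
    "GH_dist (Xq q) (dq q) {-pi/2..pi/2} (dist :: real \<Rightarrow> real \<Rightarrow> real) \<le> ?h"
    using GH_dist_le_line_embeddings[where f = "\<lambda>x. dq q x 0" and g = "\<lambda>y. y + pi / 2",
        OF nonempty dq_eq_abs_diff_dq_zero[OF q] dist_eq inj_on_dq_zero[OF q] inj bounded
          cover_q cover_interval]
    by simp_all
qed

lemma tendsto_GH_dist_Xq_interval:
  "((\<lambda>q. GH_dist (Xq q) (dq q) {-pi/2..pi/2} (dist :: real \<Rightarrow> real \<Rightarrow> real)) \<longlongrightarrow> 0) (at_left 1)"
proof (rule tendsto_sandwich[where f = "\<lambda>_. 0" and h = "\<lambda>q. \<bar>tail q 0 - pi\<bar> + sqrt (1 - q\<^sup>2)"])
  have q: "eventually (\<lambda>q. 0 < q \<and> q < (1::real)) (at_left 1)"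
    by (rule eventually_at_leftI[of 0]) auto
  show "eventually (\<lambda>q. 0 \<le> GH_dist (Xq q) (dq q) {-pi/2..pi/2} (dist :: real \<Rightarrow> real \<Rightarrow> real))
      (at_left 1)"
    using q by eventually_elim (use GH_dist_Xq_interval_le in blast)
  show "eventually (\<lambda>q. GH_dist (Xq q) (dq q) {-pi/2..pi/2} (dist :: real \<Rightarrow> real \<Rightarrow> real)
      \<le> \<bar>tail q 0 - pi\<bar> + sqrt (1 - q\<^sup>2)) (at_left 1)"
    using q by eventually_elim (use GH_dist_Xq_interval_le in blast)
  have "((\<lambda>q. \<bar>tail q 0 - pi\<bar> + sqrt (1 - q\<^sup>2)) \<longlongrightarrow> \<bar>pi - pi\<bar> + sqrt (1 - 1\<^sup>2)) (at_left (1::real))"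
    by (intro tendsto_intros tendsto_tail_zero_pi)
  then show "((\<lambda>q. \<bar>tail q 0 - pi\<bar> + sqrt (1 - q\<^sup>2)) \<longlongrightarrow> 0) (at_left (1::real))"
    by simp
qed (rule tendsto_const)

theorem theoremB:
  shows "(\<forall>q0\<in>{0<..<1::real}.
            ((\<lambda>q. GH_dist (Xq q) (dq q) (Xq q0) (dq q0)) \<longlongrightarrow> 0) (at q0))
       \<and> ((\<lambda>q. GH_dist (Xq q) (dq q) {-pi/2..pi/2} (dist :: real \<Rightarrow> real \<Rightarrow> real))
            \<longlongrightarrow> 0) (at_left 1)"
  using tendsto_GH_dist_Xq tendsto_GH_dist_Xq_interval by auto

end
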